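(* Let $\mathbb{F}$ be an algebraically closed field of characteristic $0$, $D$ an $\mathbb{F}$-vector space with $\dim D=3$, and $\Gamma\subseteq D^{\ast}$ an additive subgroup with $\Gamma\simeq\mathbb{Z}^3$ and $\bigcap_{\alpha\in\Gamma}\ker\alpha=\{0\}$. Let $M=\bigoplus_{\theta\in\Gamma}M_\theta$ be a $\Gamma$-graded $\mathcal{S}(\Gamma,D)$-module with $\dim M_\theta=1$, $M_\theta=\mathbb{F}w_\theta$. Fix a $\mathbb{Z}$-basis $\{\varepsilon_1,\varepsilon_2,\varepsilon_3\}$ of $\Gamma$ and nonzero $\partial_1\in\ker\varepsilon_2\cap\ker\varepsilon_3$, $\partial_2\in\ker\varepsilon_1\cap\ker\varepsilon_3$, $\partial_3\in\ker\varepsilon_1\cap\ker\varepsilon_2$. Then there exists $\nu\in\Gamma$ satisfying at least one of the following six conditions: (a) $x^{-\varepsilon_2}\partial_1.x^{\varepsilon_2}\partial_1.w_\nu\neq0$ and $x^{-\varepsilon_3}\partial_1.x^{\varepsilon_3}\partial_1.w_\nu\neq0$; (b) $x^{-\varepsilon_1}\partial_2.x^{\varepsilon_1}\partial_2.w_\nu\neq0$ and $x^{-\varepsilon_3}\partial_2.x^{\varepsilon_3}\partial_2.w_\nu\neq0$; (c) $x^{-\varepsilon_1}\partial_3.x^{\varepsilon_1}\partial_3.w_\nu\neq0$ and $x^{-\varepsilon_2}\partial_3.x^{\varepsilon_2}\partial_3.w_\nu\neq0$; (a') $x^{-\varepsilon_3}\partial_1.x^{\varepsilon_3}\partial_1.w_\nu=0$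 and $x^{-\varepsilon_3}\partial_2.x^{\varepsilon_3}\partial_2.w_\nu=0$; (b') $x^{-\varepsilon_1}\partial_2.x^{\varepsilon_1}\partial_2.w_\nu=0$ and $x^{-\varepsilon_1}\partial_3.x^{\varepsilon_1}\partial_3.w_\nu=0$; (c') $x^{-\varepsilon_2}\partial_1.x^{\varepsilon_2}\partial_1.w_\nu=0$ and $x^{-\varepsilon_2}\partial_3.x^{\varepsilon_2}\partial_3.w_\nu=0$.
   Context: $\mathcal{S}(\Gamma,D)$ is the Lie algebra spanned by $x^\alpha\partial$ with $\alpha\in\Gamma\setminus\{0\}$, $\partial\in\ker\alpha$ (linear in $\partial$), with bracket $[x^\alpha\partial_1,x^\beta\partial_2]=x^{\alpha+\beta}(\beta(\partial_1)\partial_2-\alpha(\partial_2)\partial_1)$; graded modules satisfy $x^\alpha\partial.M_\theta\subseteq M_{\alpha+\theta}$. *)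

theory Defs
  imports Main "HOL-Computational_Algebra.Polynomial"
begin

definition alg_closed_field :: "'a::field itself \<Rightarrow> bool" where
  "alg_closed_field _ \<longleftrightarrow> (\<forall>p :: 'a poly. degree p \<ge> 1 \<longrightarrow> (\<exists>x. poly p x = 0))"

text \<open>A module over S(Gamma,D) on the F-vector space M
  (scalar multiplication scM) is given by the action act alpha d m of the
  spanning elements x^alpha d (alpha in Gamma nonzero, d in ker alpha) on M,
  which is linear in m, linear in d, and respects the Lie bracket
  [x^a d1, x^b d2] = x^(a+b) (b(d1) d2 - a(d2) d1).
  (If a+b = 0 the bracket vector b(d1) d2 - a(d2) d1 is 0, so the bracket is 0.)\<close>
definition S_module ::
  "('a::field \<Rightarrow> 'd::ab_group_add \<Rightarrow> 'd) \<Rightarrow> ('d \<Rightarrow> 'a) set \<Rightarrow>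
   ('a \<Rightarrow> 'm::ab_group_add \<Rightarrow> 'm) \<Rightarrow> (('d \<Rightarrow> 'a) \<Rightarrow> 'd \<Rightarrow> 'm \<Rightarrow> 'm) \<Rightarrow> bool" where
  "S_module scD G scM act \<longleftrightarrow>
     vector_space scM \<and>
     (\<forall>\<alpha>\<in>G. \<forall>d. \<alpha> \<noteq> (\<lambda>_. 0) \<and> \<alpha> d = 0 \<longrightarrow> Vector_Spaces.linear scM scM (act \<alpha> d)) \<and>
     (\<forall>\<alpha>\<in>G. \<forall>d1 d2 c m. \<alpha> \<noteq> (\<lambda>_. 0) \<and> \<alpha> d1 = 0 \<and> \<alpha> d2 = 0 \<longrightarrow>
        act \<alpha> (d1 + d2) m = act \<alpha> d1 m + act \<alpha> d2 m \<and>
        act \<alpha> (scD c d1) m = scM c (act \<alpha> d1 m)) \<and>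
     (\<forall>\<alpha>\<in>G. \<forall>\<beta>\<in>G. \<forall>d1 d2 m.
        \<alpha> \<noteq> (\<lambda>_. 0) \<and> \<beta> \<noteq> (\<lambda>_. 0) \<and> \<alpha> d1 = 0 \<and> \<beta> d2 = 0 \<longrightarrow>
        act \<alpha> d1 (act \<beta> d2 m) - act \<beta> d2 (act \<alpha> d1 m) =
          (if (\<lambda>x. \<alpha> x + \<beta> x) = (\<lambda>_. 0) then 0
           else act (\<lambda>x. \<alpha> x + \<beta> x) (scD (\<beta> d1) d2 - scD (\<alpha> d2) d1) m))"

definition graded_dim1 ::
  "('d::ab_group_add \<Rightarrow> 'a::field) set \<Rightarrow> ('a \<Rightarrow> 'm::ab_group_add \<Rightarrow> 'm) \<Rightarrow>
   (('d \<Rightarrow> 'a) \<Rightarrow> 'd \<Rightarrow> 'm \<Rightarrow> 'm) \<Rightarrow> (('d \<Rightarrow> 'a) \<Rightarrow> 'm) \<Rightarrow> bool" where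
  "graded_dim1 G scM act w \<longleftrightarrow>
     (\<forall>\<theta>\<in>G. w \<theta> \<noteq> 0) \<and> inj_on w G \<and>
     module.independent scM (w ` G) \<and> module.span scM (w ` G) = UNIV \<and>
     (\<forall>\<alpha>\<in>G. \<forall>d. \<forall>\<theta>\<in>G. \<alpha> \<noteq> (\<lambda>_. 0) \<and> \<alpha> d = 0 \<longrightarrow>
        act \<alpha> d (w \<theta>) \<in> module.span scM {w (\<lambda>x. \<alpha> x + \<theta> x)})"

end

theory Submission
  imports Defs
begin

text \<open>Write x^-\<alpha> p x^\<alpha> p . w_\<theta> = Z_\<alpha>,p(\<theta>) w_\<theta> (loop_coef).
  Since x^\<alpha> p and x^-\<alpha> p commute, Z_\<alpha>,p(\<theta> + \<alpha>) = Z_\<alpha>,p(\<theta>).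
  If no \<nu> satisfied one of the six conditions, the vanishing patterns would be forced:
  Z_\<epsilon>2,p1 \<noteq> 0 exactly where Z_\<epsilon>3,p2 \<noteq> 0, and exactly where Z_\<epsilon>3,p1 = 0,
  while Z_\<epsilon>3,p1 \<noteq> 0 exactly where Z_\<epsilon>2,p3 \<noteq> 0. Each of Z_\<epsilon>2,p1 and Z_\<epsilon>3,p1
  would then be nonvanishing on whole cosets of the lattice spanned by \<epsilon>2, \<epsilon>3.
  Choosing D with a(D) = b(D) \<noteq> 0, the bracket [x^b p1, x^(a-b) D] = -b(D) x^a p1 transfers
  nonvanishing from Z_a,p1 to Z_b,p1 (for {a, b} = {\<epsilon>2, \<epsilon>3}), which contradicts the
  exclusivity of Z_\<epsilon>2,p1 and Z_\<epsilon>3,p1.\<close>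

lemma uminus_fun_nonzero: "\<alpha> \<noteq> (\<lambda>_. 0) \<Longrightarrow> (\<lambda>x. - \<alpha> x) \<noteq> (\<lambda>_. 0::'a::ab_group_add)"
  by (auto simp: fun_eq_iff)

locale graded_S_module =
  fixes scD :: "'a::field \<Rightarrow> 'd::ab_group_add \<Rightarrow> 'd"
    and G :: "('d \<Rightarrow> 'a) set"
    and scM :: "'a \<Rightarrow> 'm::ab_group_add \<Rightarrow> 'm"
    and act :: "('d \<Rightarrow> 'a) \<Rightarrow> 'd \<Rightarrow> 'm \<Rightarrow> 'm"
    and w :: "('d \<Rightarrow> 'a) \<Rightarrow> 'm"
  assumes vector_space_D: "vector_space scD"
    and G_linear: "\<And>\<alpha>. \<alpha> \<in> G \<Longrightarrow> Vector_Spaces.linear scD (*) \<alpha>"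
    and G_add: "\<And>\<alpha> \<beta>. \<alpha> \<in> G \<Longrightarrow> \<beta> \<in> G \<Longrightarrow> (\<lambda>x. \<alpha> x + \<beta> x) \<in> G"
    and G_uminus: "\<And>\<alpha>. \<alpha> \<in> G \<Longrightarrow> (\<lambda>x. - \<alpha> x) \<in> G"
    and S_module: "S_module scD G scM act"
    and graded: "graded_dim1 G scM act w"
begin

sublocale D: vector_space scD
  by (rule vector_space_D)

sublocale M: vector_space scM
  using S_module by (simp add: S_module_def)

lemma G_diff: "\<alpha> \<in> G \<Longrightarrow> \<beta> \<in> G \<Longrightarrow> (\<lambda>x. \<alpha> x - \<beta> x) \<in> G"
  using G_add[OF _ G_uminus, of \<alpha> \<beta>] by simp

lemma G_add_apply: "\<alpha> \<in> G \<Longrightarrow> \<alpha> (x + y) = \<alpha> x + \<alpha> y"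
  using G_linear[of \<alpha>] unfolding Vector_Spaces.linear_iff by blast

lemma G_scale_apply: "\<alpha> \<in> G \<Longrightarrow> \<alpha> (scD c x) = c * \<alpha> x"
  using G_linear[of \<alpha>] unfolding Vector_Spaces.linear_iff by blast

lemma G_zero_apply: "\<alpha> \<in> G \<Longrightarrow> \<alpha> 0 = 0"
  using G_scale_apply[of \<alpha> 0 0] by simp

lemma G_diff_apply: "\<alpha> \<in> G \<Longrightarrow> \<alpha> (x - y) = \<alpha> x - \<alpha> y"
  by (metis G_add_apply diff_add_cancel eq_diff_eq)

lemma act_scale:
  assumes "\<alpha> \<in> G" "\<alpha> \<noteq> (\<lambda>_. 0)" "\<alpha> d = 0"
  shows "act \<alpha> d (scM c m) = scM c (act \<alpha> d m)"
proof -
  have "Vector_Spaces.linear scM scM (act \<alpha> d)"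
    using S_module assms unfolding S_module_def by blast
  then show ?thesis unfolding Vector_Spaces.linear_iff by blast
qed

lemma act_scale_vector:
  assumes "\<alpha> \<in> G" "\<alpha> \<noteq> (\<lambda>_. 0)" "\<alpha> d = 0"
  shows "act \<alpha> (scD c d) m = scM c (act \<alpha> d m)"
  using S_module assms unfolding S_module_def by blast

lemma act_bracket:
  assumes "\<alpha> \<in> G" "\<beta> \<in> G" "\<alpha> \<noteq> (\<lambda>_. 0)" "\<beta> \<noteq> (\<lambda>_. 0)" "\<alpha> d1 = 0" "\<beta> d2 = 0"
  shows "act \<alpha> d1 (act \<beta> d2 m) - act \<beta> d2 (act \<alpha> d1 m) =
          (if (\<lambda>x. \<alpha> x + \<beta> x) = (\<lambda>_. 0) then 0
           else act (\<lambda>x. \<alpha> x + \<beta> x) (scD (\<beta> d1) d2 - scD (\<alpha> d2) d1) m)"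
  using S_module assms unfolding S_module_def by blast

lemma act_commute:
  assumes "\<alpha> \<in> G" "\<beta> \<in> G" "\<alpha> \<noteq> (\<lambda>_. 0)" "\<beta> \<noteq> (\<lambda>_. 0)"
    and "\<alpha> d1 = 0" "\<beta> d2 = 0" "\<beta> d1 = 0" "\<alpha> d2 = 0"
  shows "act \<alpha> d1 (act \<beta> d2 m) = act \<beta> d2 (act \<alpha> d1 m)"
proof -
  have "act (\<lambda>x. \<alpha> x + \<beta> x) 0 m = 0" if "(\<lambda>x. \<alpha> x + \<beta> x) \<noteq> (\<lambda>_. 0)"
    using act_scale_vector[OF G_add[OF assms(1,2)] that, of 0 0 m]
      G_zero_apply[OF assms(1)] G_zero_apply[OF assms(2)] by simp
  then show ?thesis
    using act_bracket[OF assms(1-6), of m] assms(7,8) by (simp split: if_splits)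
qed

lemma w_nonzero: "\<theta> \<in> G \<Longrightarrow> w \<theta> \<noteq> 0"
  using graded by (simp add: graded_dim1_def)

lemma scale_w_cancel: "\<theta> \<in> G \<Longrightarrow> scM a (w \<theta>) = scM b (w \<theta>) \<longleftrightarrow> a = b"
  using M.scale_cancel_right w_nonzero by simp

definition act_coef :: "('d \<Rightarrow> 'a) \<Rightarrow> 'd \<Rightarrow> ('d \<Rightarrow> 'a) \<Rightarrow> 'a" where
  "act_coef \<alpha> d \<theta> = (SOME c. act \<alpha> d (w \<theta>) = scM c (w (\<lambda>x. \<alpha> x + \<theta> x)))"

lemma act_w:
  assumes "\<alpha> \<in> G" "\<theta> \<in> G" "\<alpha> \<noteq> (\<lambda>_. 0)" "\<alpha> d = 0"
  shows "act \<alpha> d (w \<theta>) = scM (act_coef \<alpha> d \<theta>) (w (\<lambda>x. \<alpha> x + \<theta> x))"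
proof -
  have "act \<alpha> d (w \<theta>) \<in> M.span {w (\<lambda>x. \<alpha> x + \<theta> x)}"
    using graded assms by (simp add: graded_dim1_def)
  then have "\<exists>c. act \<alpha> d (w \<theta>) = scM c (w (\<lambda>x. \<alpha> x + \<theta> x))"
    using M.span_singleton by auto
  then show ?thesis unfolding act_coef_def by (rule someI_ex)
qed

lemma act_coef_scale:
  assumes "\<alpha> \<in> G" "\<theta> \<in> G" "\<alpha> \<noteq> (\<lambda>_. 0)" "\<alpha> d = 0"
  shows "act_coef \<alpha> (scD c d) \<theta> = c * act_coef \<alpha> d \<theta>"
proof -
  have "\<alpha> (scD c d) = 0"
    using assms G_scale_apply[OF assms(1)] by simp
  then have "scM (act_coef \<alpha> (scD c d) \<theta>) (w (\<lambda>x. \<alpha> x + \<theta> x)) = act \<alpha> (scD c d) (w \<theta>)"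
    using act_w[OF assms(1-3)] by simp
  also have "\<dots> = scM (c * act_coef \<alpha> d \<theta>) (w (\<lambda>x. \<alpha> x + \<theta> x))"
    using act_scale_vector[OF assms(1,3,4)] act_w[OF assms] by simp
  finally show ?thesis
    using scale_w_cancel G_add[OF assms(1,2)] by blast
qed

lemma act_act_w:
  assumes "\<alpha> \<in> G" "\<beta> \<in> G" "\<theta> \<in> G" "\<alpha> \<noteq> (\<lambda>_. 0)" "\<beta> \<noteq> (\<lambda>_. 0)" "\<alpha> d1 = 0" "\<beta> d2 = 0"
  shows "act \<alpha> d1 (act \<beta> d2 (w \<theta>)) =
     scM (act_coef \<beta> d2 \<theta> * act_coef \<alpha> d1 (\<lambda>x. \<beta> x + \<theta> x)) (w (\<lambda>x. \<alpha> x + \<beta> x + \<theta> x))"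
  using act_w[OF assms(2,3,5,7)] act_w[OF assms(1) G_add[OF assms(2,3)] assms(4,6)]
    act_scale[OF assms(1,4,6)] by (simp add: mult.commute add.assoc)

lemma act_coef_commute:
  assumes "\<alpha> \<in> G" "\<beta> \<in> G" "\<theta> \<in> G" "\<alpha> \<noteq> (\<lambda>_. 0)" "\<beta> \<noteq> (\<lambda>_. 0)"
    and "\<alpha> d1 = 0" "\<beta> d2 = 0" "\<beta> d1 = 0" "\<alpha> d2 = 0"
  shows "act_coef \<beta> d2 \<theta> * act_coef \<alpha> d1 (\<lambda>x. \<beta> x + \<theta> x)
       = act_coef \<alpha> d1 \<theta> * act_coef \<beta> d2 (\<lambda>x. \<alpha> x + \<theta> x)"
proof -
  have swap: "(\<lambda>x. \<beta> x + \<alpha> x + \<theta> x) = (\<lambda>x. \<alpha> x + \<beta> x + \<theta> x)"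
    by (simp add: fun_eq_iff add_ac)
  have "(\<lambda>x. \<alpha> x + \<beta> x + \<theta> x) \<in> G"
    using G_add[OF G_add[OF assms(1,2)] assms(3)] by simp
  moreover have "scM (act_coef \<beta> d2 \<theta> * act_coef \<alpha> d1 (\<lambda>x. \<beta> x + \<theta> x)) (w (\<lambda>x. \<alpha> x + \<beta> x + \<theta> x))
      = scM (act_coef \<alpha> d1 \<theta> * act_coef \<beta> d2 (\<lambda>x. \<alpha> x + \<theta> x)) (w (\<lambda>x. \<alpha> x + \<beta> x + \<theta> x))"
    using act_commute[OF assms(1,2,4-9), of "w \<theta>"] act_act_w[OF assms(1-7)]
      act_act_w[OF assms(2,1,3,5,4,7,6)] swap by simp
  ultimately show ?thesis
    using scale_w_cancel by blast
qed

lemma act_coef_bracket: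
  assumes "\<alpha> \<in> G" "\<beta> \<in> G" "\<theta> \<in> G" "\<alpha> \<noteq> (\<lambda>_. 0)" "\<beta> \<noteq> (\<lambda>_. 0)" "\<alpha> d1 = 0" "\<beta> d2 = 0"
    and "(\<lambda>x. \<alpha> x + \<beta> x) \<noteq> (\<lambda>_. 0)"
  shows "act_coef \<beta> d2 \<theta> * act_coef \<alpha> d1 (\<lambda>x. \<beta> x + \<theta> x)
       - act_coef \<alpha> d1 \<theta> * act_coef \<beta> d2 (\<lambda>x. \<alpha> x + \<theta> x)
       = act_coef (\<lambda>x. \<alpha> x + \<beta> x) (scD (\<beta> d1) d2 - scD (\<alpha> d2) d1) \<theta>"
proof -
  define V where "V = scD (\<beta> d1) d2 - scD (\<alpha> d2) d1"
  have swap: "(\<lambda>x. \<beta> x + \<alpha> x + \<theta> x) = (\<lambda>x. \<alpha> x + \<beta> x + \<theta> x)"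
    by (simp add: fun_eq_iff add_ac)
  have G_sum: "(\<lambda>x. \<alpha> x + \<beta> x) \<in> G" "(\<lambda>x. \<alpha> x + \<beta> x + \<theta> x) \<in> G"
    using G_add[OF assms(1,2)] G_add[OF G_add[OF assms(1,2)] assms(3)] by simp_all
  have "(\<lambda>x. \<alpha> x + \<beta> x) V = 0"
    using assms(1,2,6,7) by (simp add: V_def G_diff_apply G_scale_apply algebra_simps)
  note act_V = act_w[OF G_sum(1) assms(3,8) this]
  have "scM (act_coef \<beta> d2 \<theta> * act_coef \<alpha> d1 (\<lambda>x. \<beta> x + \<theta> x)
       - act_coef \<alpha> d1 \<theta> * act_coef \<beta> d2 (\<lambda>x. \<alpha> x + \<theta> x)) (w (\<lambda>x. \<alpha> x + \<beta> x + \<theta> x))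
      = act \<alpha> d1 (act \<beta> d2 (w \<theta>)) - act \<beta> d2 (act \<alpha> d1 (w \<theta>))"
    using act_act_w[OF assms(1-7)] act_act_w[OF assms(2,1,3,5,4,7,6)] swap
    by (simp add: M.scale_left_diff_distrib)
  also have "\<dots> = act (\<lambda>x. \<alpha> x + \<beta> x) V (w \<theta>)"
    using act_bracket[OF assms(1,2,4-7)] assms(8) by (simp add: V_def)
  also have "\<dots> = scM (act_coef (\<lambda>x. \<alpha> x + \<beta> x) V \<theta>) (w (\<lambda>x. \<alpha> x + \<beta> x + \<theta> x))"
    using act_V by simp
  finally show ?thesis
    using scale_w_cancel[OF G_sum(2)] by (simp add: V_def)
qed

definition loop_coef :: "('d \<Rightarrow> 'a) \<Rightarrow> 'd \<Rightarrow> ('d \<Rightarrow> 'a) \<Rightarrow> 'a" where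
  "loop_coef \<alpha> p \<theta> = act_coef \<alpha> p \<theta> * act_coef (\<lambda>x. - \<alpha> x) p (\<lambda>x. \<alpha> x + \<theta> x)"

lemma act_uminus_act_w:
  assumes "\<alpha> \<in> G" "\<theta> \<in> G" "\<alpha> \<noteq> (\<lambda>_. 0)" "\<alpha> p = 0"
  shows "act (\<lambda>x. - \<alpha> x) p (act \<alpha> p (w \<theta>)) = scM (loop_coef \<alpha> p \<theta>) (w \<theta>)"
  using act_act_w[OF G_uminus[OF assms(1)] assms(1,2) uminus_fun_nonzero[OF assms(3)] assms(3), of p p]
    assms(4) by (simp add: loop_coef_def)

lemma act_uminus_act_w_eq_0_iff:
  assumes "\<alpha> \<in> G" "\<theta> \<in> G" "\<alpha> \<noteq> (\<lambda>_. 0)" "\<alpha> p = 0"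
  shows "act (\<lambda>x. - \<alpha> x) p (act \<alpha> p (w \<theta>)) = 0 \<longleftrightarrow> loop_coef \<alpha> p \<theta> = 0"
  using act_uminus_act_w[OF assms] w_nonzero[OF assms(2)] by simp

lemma loop_coef_shift:
  assumes "\<alpha> \<in> G" "\<theta> \<in> G" "\<alpha> \<noteq> (\<lambda>_. 0)" "\<alpha> p = 0"
  shows "loop_coef \<alpha> p (\<lambda>x. \<theta> x + \<alpha> x) = loop_coef \<alpha> p \<theta>"
proof -
  have "(\<lambda>x. \<theta> x + \<alpha> x) \<in> G"
    using G_add[OF assms(2,1)] .
  from act_coef_commute[OF assms(1) G_uminus[OF assms(1)] this assms(3)
      uminus_fun_nonzero[OF assms(3)], of p p] assms(4)
  show ?thesis
    by (simp add: loop_coef_def add.commute mult.commute)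
qed

lemma act_coef_transfer:
  assumes G: "a \<in> G" "b \<in> G" "\<nu> \<in> G"
    and "a p = 0" "b p = 0" "b q = 0" "a q \<noteq> 0" "a D = b D" "b D \<noteq> 0"
    and a_nz: "act_coef a p \<nu> \<noteq> 0"
    and b_nz: "act_coef (\<lambda>x. - b x) q (\<lambda>x. a x + \<nu> x) \<noteq> 0"
  shows "act_coef b p \<nu> \<noteq> 0"
proof
  assume b_zero: "act_coef b p \<nu> = 0"
  have nonzero: "a \<noteq> (\<lambda>_. 0)" "b \<noteq> (\<lambda>_. 0)" "(\<lambda>x. a x - b x) \<noteq> (\<lambda>_. 0)"
    using assms(6,7,9) fun_cong[of "\<lambda>x. a x - b x" "\<lambda>_. 0" q] by auto
  have a_minus_b: "(\<lambda>x. a x - b x) \<in> G" "(\<lambda>x. a x - b x) D = 0"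
    using G_diff[OF G(1,2)] assms(8) by simp_all
  have "(\<lambda>x. b x + (a x - b x)) = a"
    by (simp add: fun_eq_iff)
  \<comment> \<open>The bracket [x^b p, x^(a-b) D] = - b(D) x^a p.\<close>
  then have "act_coef (\<lambda>x. a x - b x) D \<nu> * act_coef b p (\<lambda>x. a x - b x + \<nu> x)
      - act_coef b p \<nu> * act_coef (\<lambda>x. a x - b x) D (\<lambda>x. b x + \<nu> x)
      = act_coef a (scD (- b D) p) \<nu>"
    using act_coef_bracket[OF G(2) a_minus_b(1) G(3) nonzero(2,3) assms(5) a_minus_b(2)]
      nonzero(1) assms(4,5) by (simp add: D.scale_minus_left)
  also have "\<dots> = - b D * act_coef a p \<nu>"
    using act_coef_scale[OF G(1,3) nonzero(1) assms(4)] .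
  finally have "act_coef b p (\<lambda>x. a x - b x + \<nu> x) \<noteq> 0"
    using b_zero a_nz assms(9) by auto
  moreover have "act_coef (\<lambda>x. - b x) q (\<lambda>x. a x + \<nu> x) * act_coef b p (\<lambda>x. - b x + (a x + \<nu> x))
      = act_coef b p (\<lambda>x. a x + \<nu> x) * act_coef (\<lambda>x. - b x) q (\<lambda>x. b x + (a x + \<nu> x))"
    using act_coef_commute[OF G(2) G_uminus[OF G(2)] G_add[OF G(1,3)] nonzero(2)
        uminus_fun_nonzero[OF nonzero(2)] assms(5)] assms(5,6) by simp
  moreover have "(\<lambda>x. - b x + (a x + \<nu> x)) = (\<lambda>x. a x - b x + \<nu> x)"
    by (simp add: fun_eq_iff)
  ultimately have "act_coef b p (\<lambda>x. a x + \<nu> x) \<noteq> 0"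
    using b_nz by auto
  moreover have "act_coef b p \<nu> * act_coef a p (\<lambda>x. b x + \<nu> x)
      = act_coef a p \<nu> * act_coef b p (\<lambda>x. a x + \<nu> x)"
    using act_coef_commute[OF G(1,2,3) nonzero(1,2) assms(4,5,5,4)] .
  ultimately show False
    using b_zero a_nz by simp
qed

lemma loop_coef_transfer:
  assumes G: "a \<in> G" "b \<in> G" "\<nu> \<in> G"
    and "a p = 0" "b p = 0" "b q = 0" "a r = 0" "a q \<noteq> 0" "b r \<noteq> 0"
    and "loop_coef a p \<nu> \<noteq> 0" "loop_coef a p (\<lambda>x. \<nu> x + b x - a x) \<noteq> 0"
    and "loop_coef b q (\<lambda>x. \<nu> x + a x - b x) \<noteq> 0" "loop_coef b q (\<lambda>x. \<nu> x + b x - a x) \<noteq> 0"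
  shows "loop_coef b p \<nu> \<noteq> 0"
proof -
  define D where "D = scD (b r) q + scD (a q) r"
  have D: "a D = b D" "b D \<noteq> 0"
    using assms(4-9) G(1,2) by (simp_all add: D_def G_add_apply G_scale_apply)
  have "act_coef b p \<nu> \<noteq> 0"
  proof (rule act_coef_transfer[OF G assms(4-6,8) D])
    show "act_coef a p \<nu> \<noteq> 0"
      using assms(10) by (simp add: loop_coef_def)
    have "(\<lambda>x. b x + (\<nu> x + a x - b x)) = (\<lambda>x. a x + \<nu> x)"
      by (simp add: fun_eq_iff)
    then show "act_coef (\<lambda>x. - b x) q (\<lambda>x. a x + \<nu> x) \<noteq> 0"
      using assms(12) by (simp add: loop_coef_def)
  qed
  moreover have "act_coef (\<lambda>x. - b x) p (\<lambda>x. b x + \<nu> x) \<noteq> 0"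
  proof (rule act_coef_transfer[OF G_uminus[OF G(1)] G_uminus[OF G(2)] G_add[OF G(2,3)]])
    have "(\<lambda>x. a x + (\<nu> x + b x - a x)) = (\<lambda>x. b x + \<nu> x)"
      by (simp add: fun_eq_iff)
    then show "act_coef (\<lambda>x. - a x) p (\<lambda>x. b x + \<nu> x) \<noteq> 0"
      using assms(11) by (simp add: loop_coef_def)
    have "(\<lambda>x. - a x + (b x + \<nu> x)) = (\<lambda>x. \<nu> x + b x - a x)"
      by (simp add: fun_eq_iff)
    then show "act_coef (\<lambda>x. - (- b x)) q (\<lambda>x. - a x + (b x + \<nu> x)) \<noteq> 0"
      using assms(13) by (simp add: loop_coef_def)
  qed (use assms(4-6,8) D in auto)
  ultimately show ?thesis
    by (simp add: loop_coef_def)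
qed

lemma loop_coef_swap:
  assumes G: "a \<in> G" "b \<in> G" "\<nu> \<in> G"
    and "a p = 0" "b p = 0" "b q = 0" "a r = 0" "a q \<noteq> 0" "b r \<noteq> 0"
    and same: "\<And>\<mu>. \<mu> \<in> G \<Longrightarrow> loop_coef a p \<mu> \<noteq> 0 \<longleftrightarrow> loop_coef b q \<mu> \<noteq> 0"
    and "loop_coef a p \<nu> \<noteq> 0"
  shows "loop_coef b p \<nu> \<noteq> 0"
proof -
  have nonzero: "a \<noteq> (\<lambda>_. 0)" "b \<noteq> (\<lambda>_. 0)"
    using assms(8,9) by auto
  have shift_a: "loop_coef a p (\<lambda>x. \<mu> x + a x) = loop_coef a p \<mu>"
    and unshift_a: "loop_coef a p (\<lambda>x. \<mu> x - a x) = loop_coef a p \<mu>" if "\<mu> \<in> G" for \<mu>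
    using loop_coef_shift[OF G(1) that nonzero(1) assms(4)]
      loop_coef_shift[OF G(1) G_diff[OF that G(1)] nonzero(1) assms(4)] by simp_all
  have shift_b: "loop_coef a p (\<lambda>x. \<mu> x + b x) \<noteq> 0 \<longleftrightarrow> loop_coef a p \<mu> \<noteq> 0"
    and unshift_b: "loop_coef a p (\<lambda>x. \<mu> x - b x) \<noteq> 0 \<longleftrightarrow> loop_coef a p \<mu> \<noteq> 0"
    if "\<mu> \<in> G" for \<mu>
    using loop_coef_shift[OF G(2) that nonzero(2) assms(6)]
      loop_coef_shift[OF G(2) G_diff[OF that G(2)] nonzero(2) assms(6)]
      same[OF that] same[OF G_add[OF that G(2)]] same[OF G_diff[OF that G(2)]] by simp_all
  have sum_G: "(\<lambda>x. \<nu> x + b x) \<in> G" "(\<lambda>x. \<nu> x + a x) \<in> G"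
    using G_add G by blast+
  have "loop_coef a p (\<lambda>x. \<nu> x + b x - a x) \<noteq> 0"
    using unshift_a[OF sum_G(1)] shift_b[OF G(3)] assms(11) by simp
  moreover have "loop_coef a p (\<lambda>x. \<nu> x + a x - b x) \<noteq> 0"
    using unshift_b[OF sum_G(2)] shift_a[OF G(3)] assms(11) by simp
  ultimately show ?thesis
    using loop_coef_transfer[OF G assms(4-9,11)] same G_diff sum_G G by blast
qed

lemma loop_coef_alternatives:
  assumes G: "e2 \<in> G" "e3 \<in> G"
    and "e2 p1 = 0" "e3 p1 = 0" "e3 p2 = 0" "e2 p3 = 0" "e2 p2 \<noteq> 0" "e3 p3 \<noteq> 0"
  shows "\<exists>\<nu>\<in>G.
     (loop_coef e2 p1 \<nu> \<noteq> 0 \<and> loop_coef e3 p1 \<nu> \<noteq> 0) \<or>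
     (loop_coef e1 p2 \<nu> \<noteq> 0 \<and> loop_coef e3 p2 \<nu> \<noteq> 0) \<or>
     (loop_coef e1 p3 \<nu> \<noteq> 0 \<and> loop_coef e2 p3 \<nu> \<noteq> 0) \<or>
     (loop_coef e3 p1 \<nu> = 0 \<and> loop_coef e3 p2 \<nu> = 0) \<or>
     (loop_coef e1 p2 \<nu> = 0 \<and> loop_coef e1 p3 \<nu> = 0) \<or>
     (loop_coef e2 p1 \<nu> = 0 \<and> loop_coef e2 p3 \<nu> = 0)"
proof (rule ccontr)
  assume none: "\<not> ?thesis"
  have same_p1_p2: "loop_coef e2 p1 \<mu> \<noteq> 0 \<longleftrightarrow> loop_coef e3 p2 \<mu> \<noteq> 0"
    and same_p1_p3: "loop_coef e3 p1 \<mu> \<noteq> 0 \<longleftrightarrow> loop_coef e2 p3 \<mu> \<noteq> 0"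
    and exclusive: "loop_coef e3 p1 \<mu> \<noteq> 0 \<longleftrightarrow> loop_coef e2 p1 \<mu> = 0" if "\<mu> \<in> G" for \<mu>
    using none that by blast+
  show False
  proof (cases "loop_coef e2 p1 e2 = 0")
    case True
    then have "loop_coef e3 p1 e2 \<noteq> 0"
      using exclusive G(1) by blast
    then have "loop_coef e2 p1 e2 \<noteq> 0"
      using loop_coef_swap[OF G(2,1,1) assms(4,3,6,5,8,7)] same_p1_p3 by blast
    with True show False by contradiction
  next
    case False
    then have "loop_coef e3 p1 e2 \<noteq> 0"
      using loop_coef_swap[OF G(1,2,1) assms(3-8)] same_p1_p2 by blast
    with False exclusive G(1) show False by blast
  qed
qed

end

lemma int_comb_add:
  assumes "G = {(\<lambda>x. of_int a * e1 x + of_int b * e2 x + of_int c * e3 x) | a b c. True}"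
    and "\<alpha> \<in> G" "\<beta> \<in> G"
  shows "(\<lambda>x. \<alpha> x + \<beta> x) \<in> G"
proof -
  obtain a b c a' b' c' where
    "\<alpha> = (\<lambda>x. of_int a * e1 x + of_int b * e2 x + of_int c * e3 x)"
    "\<beta> = (\<lambda>x. of_int a' * e1 x + of_int b' * e2 x + of_int c' * e3 x)"
    using assms by blast
  then have "(\<lambda>x. \<alpha> x + \<beta> x)
      = (\<lambda>x. of_int (a + a') * e1 x + of_int (b + b') * e2 x + of_int (c + c') * e3 x)"
    by (simp add: fun_eq_iff algebra_simps)
  then show ?thesis
    using assms(1) by blast
qed

lemma int_comb_uminus:
  assumes "G = {(\<lambda>x. of_int a * e1 x + of_int b * e2 x + of_int c * e3 x) | a b c. True}"
    and "\<alpha> \<in> G"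
  shows "(\<lambda>x. - \<alpha> x) \<in> G"
proof -
  obtain a b c where "\<alpha> = (\<lambda>x. of_int a * e1 x + of_int b * e2 x + of_int c * e3 x)"
    using assms by blast
  then have "(\<lambda>x. - \<alpha> x) = (\<lambda>x. of_int (- a) * e1 x + of_int (- b) * e2 x + of_int (- c) * e3 x)"
    by (simp add: fun_eq_iff algebra_simps)
  then show ?thesis
    using assms(1) by blast
qed

lemma int_comb_generators:
  assumes "G = {(\<lambda>x. of_int a * e1 x + of_int b * e2 x + of_int c * e3 x) | a b c. True}"
  shows "e1 \<in> G" "e2 \<in> G" "e3 \<in> G"
proof -
  have "(\<lambda>x. of_int 1 * e1 x + of_int 0 * e2 x + of_int 0 * e3 x) \<in> G"
    and "(\<lambda>x. of_int 0 * e1 x + of_int 1 * e2 x + of_int 0 * e3 x) \<in> G"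
    and "(\<lambda>x. of_int 0 * e1 x + of_int 0 * e2 x + of_int 1 * e3 x) \<in> G"
    using assms by blast+
  then show "e1 \<in> G" "e2 \<in> G" "e3 \<in> G"
    by simp_all
qed

lemma int_comb_vanish:
  assumes "G = {(\<lambda>x. of_int a * e1 x + of_int b * e2 x + of_int c * e3 x) | a b c. True}"
    and "e1 d = 0" "e2 d = 0" "e3 d = 0" "\<alpha> \<in> G"
  shows "\<alpha> d = 0"
  using assms by auto

theorem lemma3p5:
  fixes scD :: "'a::field_char_0 \<Rightarrow> 'd::ab_group_add \<Rightarrow> 'd"
    and G :: "('d \<Rightarrow> 'a) set"
    and scM :: "'a \<Rightarrow> 'm::ab_group_add \<Rightarrow> 'm"
    and act :: "('d \<Rightarrow> 'a) \<Rightarrow> 'd \<Rightarrow> 'm \<Rightarrow> 'm"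
    and w :: "('d \<Rightarrow> 'a) \<Rightarrow> 'm"
    and e1 e2 e3 :: "'d \<Rightarrow> 'a"
    and p1 p2 p3 :: 'd
  assumes F: "alg_closed_field TYPE('a)"
    and D: "vector_space scD" "vector_space.dim scD UNIV = 3"
    and G_lin: "\<forall>\<alpha>\<in>G. Vector_Spaces.linear scD (*) \<alpha>"
    and G_basis: "G = {(\<lambda>x. of_int a * e1 x + of_int b * e2 x + of_int c * e3 x) | a b c. True}"
    and e_indep: "\<And>a b c :: int. (\<lambda>x. of_int a * e1 x + of_int b * e2 x + of_int c * e3 x) = (\<lambda>_. 0)
                     \<Longrightarrow> a = 0 \<and> b = 0 \<and> c = 0"
    and G_sep: "\<And>d. (\<forall>\<alpha>\<in>G. \<alpha> d = 0) \<Longrightarrow> d = 0"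
    and M: "S_module scD G scM act" "graded_dim1 G scM act w"
    and p1: "p1 \<noteq> 0" "e2 p1 = 0" "e3 p1 = 0"
    and p2: "p2 \<noteq> 0" "e1 p2 = 0" "e3 p2 = 0"
    and p3: "p3 \<noteq> 0" "e1 p3 = 0" "e2 p3 = 0"
  shows "\<exists>\<nu>\<in>G.
     (act (\<lambda>x. - e2 x) p1 (act e2 p1 (w \<nu>)) \<noteq> 0 \<and> act (\<lambda>x. - e3 x) p1 (act e3 p1 (w \<nu>)) \<noteq> 0) \<or>
     (act (\<lambda>x. - e1 x) p2 (act e1 p2 (w \<nu>)) \<noteq> 0 \<and> act (\<lambda>x. - e3 x) p2 (act e3 p2 (w \<nu>)) \<noteq> 0) \<or>
     (act (\<lambda>x. - e1 x) p3 (act e1 p3 (w \<nu>)) \<noteq> 0 \<and> act (\<lambda>x. - e2 x) p3 (act e2 p3 (w \<nu>)) \<noteq> 0) \<or>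
     (act (\<lambda>x. - e3 x) p1 (act e3 p1 (w \<nu>)) = 0 \<and> act (\<lambda>x. - e3 x) p2 (act e3 p2 (w \<nu>)) = 0) \<or>
     (act (\<lambda>x. - e1 x) p2 (act e1 p2 (w \<nu>)) = 0 \<and> act (\<lambda>x. - e1 x) p3 (act e1 p3 (w \<nu>)) = 0) \<or>
     (act (\<lambda>x. - e2 x) p1 (act e2 p1 (w \<nu>)) = 0 \<and> act (\<lambda>x. - e2 x) p3 (act e2 p3 (w \<nu>)) = 0)"
proof -
  interpret S: graded_S_module scD G scM act w
    by (rule graded_S_module.intro)
      (use D(1) G_lin M int_comb_add[OF G_basis] int_comb_uminus[OF G_basis] in auto)
  note e_G = int_comb_generators[OF G_basis]
  have e_p: "e1 p1 \<noteq> 0" "e2 p2 \<noteq> 0" "e3 p3 \<noteq> 0"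
    using G_sep int_comb_vanish[OF G_basis] p1 p2 p3 by metis+
  then have e_nonzero: "e1 \<noteq> (\<lambda>_. 0)" "e2 \<noteq> (\<lambda>_. 0)" "e3 \<noteq> (\<lambda>_. 0)"
    by auto
  obtain \<nu> where "\<nu> \<in> G" and alternatives:
     "(S.loop_coef e2 p1 \<nu> \<noteq> 0 \<and> S.loop_coef e3 p1 \<nu> \<noteq> 0) \<or>
     (S.loop_coef e1 p2 \<nu> \<noteq> 0 \<and> S.loop_coef e3 p2 \<nu> \<noteq> 0) \<or>
     (S.loop_coef e1 p3 \<nu> \<noteq> 0 \<and> S.loop_coef e2 p3 \<nu> \<noteq> 0) \<or>
     (S.loop_coef e3 p1 \<nu> = 0 \<and> S.loop_coef e3 p2 \<nu> = 0) \<or>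
     (S.loop_coef e1 p2 \<nu> = 0 \<and> S.loop_coef e1 p3 \<nu> = 0) \<or>
     (S.loop_coef e2 p1 \<nu> = 0 \<and> S.loop_coef e2 p3 \<nu> = 0)"
    using S.loop_coef_alternatives[OF e_G(2,3) p1(2,3) p2(3) p3(3) e_p(2,3)] by blast
  then show ?thesis
    using e_G e_nonzero p1 p2 p3
    by (intro bexI[OF _ \<open>\<nu> \<in> G\<close>]) (simp add: S.act_uminus_act_w_eq_0_iff)
qed

end
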